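(* Let $q\in(0,1]$. Assume: [A6] for every $j\in\mathcal J^{(0)}$, $(\xi_T^j)^{-1/q}|\alpha_T^j|^{-1}\to0$ in probability as $T\to\infty$; [A7$'$] for some $R>0$: (i) for every $T\in\mathbb T$, $\mathbb H_T$ is almost surely thrice differentiable in $\theta$ on $B=\{\theta\in\Theta:|\theta-\theta^*|<R\}$; (ii) $\|a_T\|\,\partial_\theta\mathbb H_T(\theta^* )=O_p(1)$; (iii) $\|a_T\|^2\sup_{\theta\in B}|\partial_\theta^2\mathbb H_T(\theta)|=O_p(1)$; (iv) $\|a_T\|^2\sup_{\theta\in B}|\partial_\theta^3\mathbb H_T(\theta)|=O_p(1)$, as $T\to\infty$. Then [A7] holds: for every $M>0$, $$\sup_{\substack{u,v\in\mathbb U_T,\ |u|,|v|<M,\ u\neq v}}\frac{|\mathbb H_T(\theta^*+a_Tu)-\mathbb H_T(\theta^*+a_Tv)|}{|u-v|^q}\,\|G_T^{(00)}\|^q\to0$$ in probability as $T\to\infty$.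
   Context: Let $\Theta\subset\mathbb R^{\mathsf p}$ be a bounded open set with closure $\overline\Theta$ and $\theta^*\in\Theta$. Let $(\Omega,\mathcal F,P)$ be a probability space, $\mathbb T\subset\mathbb R_{\ge0}$ with $\sup\mathbb T=\infty$; limits $T\to\infty$ are along $\mathbb T$. For each $T\in\mathbb T$, $\mathbb H_T:\Omega\times\overline\Theta\to\mathbb R$ is a random field continuous in $\theta$ for every $\omega$. $\xi_T^j>0$ ($j=1,\dots,\mathsf p$) are (possibly random) positive quantities (the penalty weights). $\mathcal J^{(0)}=\{j:\theta^*_j=0\}$, $\mathcal J^{(1)}=\{j:\theta^*_j\ne0\}$; for a matrix $A$, $A^{(00)}=(A_{ij})_{i,j\in\mathcal J^{(0)}}$. $a_T=\mathrm{diag}(\alpha_T^1,\dots,\alpha_T^{\mathsf p})$ is a deterministic invertible diagonal matrix with $\|a_T\|\to0$, $\|A\|$ denoting the spectral norm. $\mathbb U_T=\{u:\theta^*+a_Tu\in\overline\Theta\}$. $\tilde a_T$ is the diagonal matrix with $(\tilde a_T)_{jj}=(\xi_T^j)^{-1/q}$ for $j\in\mathcal J^{(0)}$ and $(\tilde a_T)_{jj}=\alpha_T^j$ for $j\in\mathcal J^{(1)}$, and $G_T=a_T^{-1}\tilde a_T$. $\partial_\theta^k\mathbb H_T$ denotes the $k$-th derivative tensor in $\theta$. *)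

theory Defs
  imports "HOL-Analysis.Analysis" "HOL-Probability.Probability"
begin

definition along :: "real set \<Rightarrow> real filter" where
  "along TT = inf at_top (principal TT)"

text \<open>Outer probability (the random quantities need not be measurable).\<close>
definition outer_prob :: "'a measure \<Rightarrow> 'a set \<Rightarrow> real" where
  "outer_prob M A = Inf {measure M B | B. B \<in> sets M \<and> A \<subseteq> B}"

text \<open>X_T \<rightarrow> 0 in (outer) probability, for nonnegative (extended real) X.\<close>
definition tendsto0_prob :: "'a measure \<Rightarrow> real filter \<Rightarrow> (real \<Rightarrow> 'a \<Rightarrow> ereal) \<Rightarrow> bool" where
  "tendsto0_prob M F X \<longleftrightarrow>
     (\<forall>\<epsilon>>0. ((\<lambda>T. outer_prob M {\<omega> \<in> space M. ereal \<epsilon> < X T \<omega>}) \<longlongrightarrow> 0) F)"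

text \<open>X_T = O_p(1), for nonnegative (extended real) X.\<close>
definition bounded_prob :: "'a measure \<Rightarrow> real filter \<Rightarrow> (real \<Rightarrow> 'a \<Rightarrow> ereal) \<Rightarrow> bool" where
  "bounded_prob M F X \<longleftrightarrow>
     (\<forall>\<epsilon>>0. \<exists>C::real. eventually (\<lambda>T. outer_prob M {\<omega> \<in> space M. ereal C < X T \<omega>} < \<epsilon>) F)"

definition spec_norm :: "real^'n^'n \<Rightarrow> real" where
  "spec_norm A = onorm (\<lambda>x. A *v x)"

definition diag_mat :: "('n::finite \<Rightarrow> real) \<Rightarrow> real^'n^'n" where
  "diag_mat d = (\<chi> i j. if i = j then d i else 0)"

text \<open>Submatrix A^(00) indexed by J0, realised as the zero-padded matrix (same spectral norm).\<close>
definition sub00 :: "'n set \<Rightarrow> real^'n^'n \<Rightarrow> real^'n^'n" where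
  "sub00 J A = (\<chi> i j. if i \<in> J \<and> j \<in> J then A $ i $ j else 0)"

definition J0 :: "real^'n \<Rightarrow> 'n set" where
  "J0 \<theta>s = {j. \<theta>s $ j = 0}"

definition atil :: "real \<Rightarrow> real^'n \<Rightarrow> ('n::finite \<Rightarrow> real) \<Rightarrow> ('n \<Rightarrow> real) \<Rightarrow> real^'n^'n" where
  "atil q \<theta>s alpha xi = diag_mat (\<lambda>j. if \<theta>s $ j = 0 then xi j powr (-1/q) else alpha j)"

definition Gmat :: "real \<Rightarrow> real^'n \<Rightarrow> ('n::finite \<Rightarrow> real) \<Rightarrow> ('n \<Rightarrow> real) \<Rightarrow> real^'n^'n" where
  "Gmat q \<theta>s alpha xi = matrix_inv (diag_mat alpha) ** atil q \<theta>s alpha xi"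

definition tensor3_app :: "real^'n^'n^'n \<Rightarrow> real^'n \<Rightarrow> real^'n^'n" where
  "tensor3_app D h = (\<chi> i j. \<Sum>k\<in>UNIV. D $ i $ j $ k * h $ k)"

end

theory Submission
  imports Defs
begin

text \<open>Two applications of the mean value theorem give
  |H(\<theta>* + a u) - H(\<theta>* + a v)| \<le> (\<parallel>a\<parallel> |\<partial>H(\<theta>*)| + M \<parallel>a\<parallel>^2 sup |\<partial>^2 H|) |u - v|
  whenever the derivatives exist on a ball containing the points \<theta>* + a u, which holds
  almost surely once \<parallel>a_T\<parallel> M is small.  As |u - v| < 2M, the Hoelder quotient of order q \<le> 1
  is therefore at most (2M)^(1-q) times a quantity that is O_p(1) by [A7'].  The matrix G_T^(00)
  is diagonal with entries (\<xi>_T^j)^(-1/q) / \<alpha>_T^j, so its norm is o_p(1) by [A6], and an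
  O_p(1) quantity times an o_p(1) quantity is o_p(1).\<close>

section \<open>Diagonal matrices and the spectral norm\<close>

lemma norm_matrix_vector_mult_le:
  fixes A :: "real^'n::finite^'m::finite"
  shows "norm (A *v x) \<le> norm A * norm x"
proof -
  have "norm (A *v x) = L2_set (\<lambda>i. \<bar>A $ i \<bullet> x\<bar>) UNIV"
    by (simp add: norm_vec_def matrix_vector_mul_component)
  also have "\<dots> \<le> L2_set (\<lambda>i. norm (A $ i) * norm x) UNIV"
    by (intro L2_set_mono) (auto simp: Cauchy_Schwarz_ineq2)
  also have "\<dots> = norm A * norm x"
    unfolding norm_vec_def[of A] by (simp add: L2_set_left_distrib)
  finally show ?thesis .
qed

lemma spec_norm_nonneg: "0 \<le> spec_norm A"
  unfolding spec_norm_def by (intro onorm_pos_le matrix_vector_mul_bounded_linear)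

lemma norm_mult_vec_le_spec_norm: "norm (A *v x) \<le> spec_norm A * norm x"
  unfolding spec_norm_def by (intro onorm matrix_vector_mul_bounded_linear)

lemma diag_mat_mult: "diag_mat a ** diag_mat b = diag_mat (\<lambda>j. a j * b j)"
  unfolding diag_mat_def matrix_matrix_mult_def
  by (simp add: vec_eq_iff if_distrib[where f="\<lambda>x. x * _"] cong: if_cong)

lemma diag_mat_1: "diag_mat (\<lambda>_. 1) = mat 1"
  unfolding diag_mat_def mat_def by simp

lemma matrix_inv_diag_mat:
  assumes "\<And>j. a j \<noteq> 0"
  shows "matrix_inv (diag_mat a) = diag_mat (\<lambda>j. inverse (a j))"
proof -
  let ?B = "diag_mat (\<lambda>j. inverse (a j))"
  have B: "diag_mat a ** ?B = mat 1 \<and> ?B ** diag_mat a = mat 1"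
    using assms by (simp add: diag_mat_mult flip: diag_mat_1)
  let ?C = "matrix_inv (diag_mat a)"
  have C: "diag_mat a ** ?C = mat 1 \<and> ?C ** diag_mat a = mat 1"
    unfolding matrix_inv_def by (rule someI[of _ ?B]) (rule B)
  have "?C = (?C ** diag_mat a) ** ?B"
    using B by (simp flip: matrix_mul_assoc)
  also have "\<dots> = ?B"
    using C by simp
  finally show ?thesis .
qed

lemma sub00_diag_mat: "sub00 J (diag_mat d) = diag_mat (\<lambda>j. if j \<in> J then d j else 0)"
  unfolding sub00_def diag_mat_def by (simp add: vec_eq_iff)

lemma spec_norm_diag_mat_le: "spec_norm (diag_mat d) \<le> (\<Sum>j\<in>UNIV. \<bar>d j\<bar>)"
  unfolding spec_norm_def
  by (rule order_trans[OF onorm_le_matrix_component_sum[unfolded fun_eq_iff[symmetric]]])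
     (simp add: diag_mat_def if_distrib[where f=abs] cong: if_cong)

lemma sub00_Gmat:
  assumes "\<And>j. alpha j \<noteq> 0"
  shows "sub00 (J0 \<theta>s) (Gmat q \<theta>s alpha xi)
           = diag_mat (\<lambda>j. if j \<in> J0 \<theta>s then xi j powr (-1/q) / alpha j else 0)"
  unfolding Gmat_def atil_def matrix_inv_diag_mat[OF assms] diag_mat_mult sub00_diag_mat
  by (auto simp: J0_def divide_inverse mult.commute intro!: arg_cong[where f = diag_mat])

lemma spec_norm_sub00_Gmat_le:
  assumes "\<And>j. alpha j \<noteq> 0"
  shows "spec_norm (sub00 (J0 \<theta>s) (Gmat q \<theta>s alpha xi))
           \<le> (\<Sum>j\<in>J0 \<theta>s. xi j powr (-1/q) / \<bar>alpha j\<bar>)"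
  using spec_norm_diag_mat_le[of "\<lambda>j. if j \<in> J0 \<theta>s then xi j powr (-1/q) / alpha j else 0"]
  unfolding sub00_Gmat[OF assms]
  by (simp add: if_distrib[where f = abs] sum.If_cases)

section \<open>Mean value estimates\<close>

lemma lipschitz_on_ball_if_second_derivative_bounded:
  fixes f :: "real^'n::finite \<Rightarrow> real" and grad :: "real^'n \<Rightarrow> real^'n"
    and hess :: "real^'n \<Rightarrow> real^'n^'n"
  assumes der: "\<And>\<theta>. \<theta> \<in> ball c r \<Longrightarrow>
      (f has_derivative (\<lambda>h. grad \<theta> \<bullet> h)) (at \<theta>) \<and> (grad has_derivative (\<lambda>h. hess \<theta> *v h)) (at \<theta>)"
    and hess_le: "\<And>\<theta>. \<theta> \<in> ball c r \<Longrightarrow> norm (hess \<theta>) \<le> B"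
    and x: "x \<in> ball c r" and y: "y \<in> ball c r"
  shows "\<bar>f x - f y\<bar> \<le> (norm (grad c) + B * r) * norm (x - y)"
proof -
  have c: "c \<in> ball c r"
    using x le_less_trans[OF zero_le_dist, of c x r] by simp
  have "onorm (\<lambda>h. hess \<theta> *v h) \<le> B" if "\<theta> \<in> ball c r" for \<theta>
    using hess_le[OF that] norm_matrix_vector_mult_le[of "hess \<theta>"]
    by (intro onorm_le) (meson mult_right_mono norm_ge_zero order_trans)
  then have "norm (grad \<theta> - grad c) \<le> B * norm (\<theta> - c)" if "\<theta> \<in> ball c r" for \<theta>
    using der that c by (intro differentiable_bound[of "ball c r"]) (auto intro: has_derivative_at_withinI)
  moreover have "0 \<le> B"
    using hess_le[OF c] norm_ge_zero order_trans by blast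
  ultimately have "norm (grad \<theta>) \<le> norm (grad c) + B * r" if "\<theta> \<in> ball c r" for \<theta>
    using that norm_triangle_sub[of "grad \<theta>" "grad c"] mult_left_mono[of "norm (\<theta> - c)" r B]
    by (force simp: dist_norm norm_minus_commute)
  then have "onorm (\<lambda>h. grad \<theta> \<bullet> h) \<le> norm (grad c) + B * r" if "\<theta> \<in> ball c r" for \<theta>
    using that Cauchy_Schwarz_ineq2
    by (intro onorm_le) (fastforce intro: order_trans mult_right_mono)
  then have "norm (f x - f y) \<le> (norm (grad c) + B * r) * norm (x - y)"
    using der x y by (intro differentiable_bound[of "ball c r" f "\<lambda>\<theta> h. grad \<theta> \<bullet> h"])
      (auto intro: has_derivative_at_withinI)
  then show ?thesis
    by simp
qed

lemma rescaled_difference_le: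
  fixes f :: "real^'n::finite \<Rightarrow> real" and grad :: "real^'n \<Rightarrow> real^'n"
    and hess :: "real^'n \<Rightarrow> real^'n^'n" and A :: "real^'n^'n"
  assumes der: "\<And>\<theta>. \<theta> \<in> ball c \<rho> \<Longrightarrow>
      (f has_derivative (\<lambda>h. grad \<theta> \<bullet> h)) (at \<theta>) \<and> (grad has_derivative (\<lambda>h. hess \<theta> *v h)) (at \<theta>)"
    and hess_le: "\<And>\<theta>. \<theta> \<in> ball c \<rho> \<Longrightarrow> (spec_norm A)\<^sup>2 * norm (hess \<theta>) \<le> k"
    and radius: "spec_norm A * Mb < \<rho>"
    and u: "norm u < Mb" and v: "norm v < Mb"
  shows "\<bar>f (c + A *v u) - f (c + A *v v)\<bar> \<le> (spec_norm A * norm (grad c) + k * Mb) * norm (u - v)"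
proof -
  define s where "s = spec_norm A"
  have "0 \<le> s"
    unfolding s_def by (rule spec_norm_nonneg)
  have "0 < Mb"
    using u norm_ge_zero[of u] by linarith
  then have "c \<in> ball c \<rho>"
    using radius mult_nonneg_nonneg[OF \<open>0 \<le> s\<close> less_imp_le[OF \<open>0 < Mb\<close>]]
    unfolding s_def by simp
  then have "0 \<le> k"
    using hess_le by (meson norm_ge_zero order_trans zero_le_power2 mult_nonneg_nonneg)
  show ?thesis
  proof (cases "s = 0")
    case True
    then have "A *v u = 0" "A *v v = 0"
      using norm_mult_vec_le_spec_norm[of A] unfolding s_def by (metis mult_zero_left norm_le_zero_iff)+
    then show ?thesis
      using \<open>0 \<le> k\<close> \<open>0 < Mb\<close> spec_norm_nonneg[of A] by simp
  next
    case False
    with \<open>0 \<le> s\<close> have "0 < s" by simp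
    have in_ball: "c + A *v w \<in> ball c (s * Mb)" if "norm w < Mb" for w
      using norm_mult_vec_le_spec_norm[of A w] mult_strict_left_mono[OF that \<open>0 < s\<close>]
      unfolding s_def by (simp add: dist_norm)
    have "ball c (s * Mb) \<subseteq> ball c \<rho>"
      using radius unfolding s_def by auto
    moreover have "norm (hess \<theta>) \<le> k / s\<^sup>2" if "\<theta> \<in> ball c \<rho>" for \<theta>
      using hess_le[OF that] \<open>0 < s\<close> unfolding s_def by (simp add: field_simps)
    ultimately have "\<bar>f (c + A *v u) - f (c + A *v v)\<bar>
        \<le> (norm (grad c) + k / s\<^sup>2 * (s * Mb)) * norm ((c + A *v u) - (c + A *v v))"
      using der in_ball u v
      by (intro lipschitz_on_ball_if_second_derivative_bounded[where hess = hess]) auto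
    also have "\<dots> \<le> (norm (grad c) + k / s\<^sup>2 * (s * Mb)) * (s * norm (u - v))"
      using norm_mult_vec_le_spec_norm[of A "u - v"] \<open>0 \<le> k\<close> \<open>0 < s\<close> \<open>0 < Mb\<close>
      unfolding s_def by (intro mult_left_mono) (auto simp: matrix_vector_mult_diff_distrib)
    also have "\<dots> = (s * norm (grad c) + k * Mb) * norm (u - v)"
      using \<open>0 < s\<close> by (simp add: power2_eq_square field_simps)
    finally show ?thesis
      unfolding s_def .
  qed
qed

lemma divide_powr_le_if_le_mult:
  fixes a L t b q :: real
  assumes "a \<le> L * t" "0 < t" "t \<le> b" "0 \<le> L" "q \<le> 1"
  shows "a / t powr q \<le> L * b powr (1 - q)"
proof -
  have "a / t powr q \<le> L * t / t powr q"
    using assms by (simp add: divide_right_mono)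
  also have "\<dots> = L * t powr (1 - q)"
    using assms by (simp add: powr_diff)
  also have "\<dots> \<le> L * b powr (1 - q)"
    using assms by (intro mult_left_mono powr_mono2) auto
  finally show ?thesis .
qed

lemma holder_quotient_le:
  fixes f :: "real^'n::finite \<Rightarrow> real" and grad :: "real^'n \<Rightarrow> real^'n"
    and hess :: "real^'n \<Rightarrow> real^'n^'n" and A :: "real^'n^'n"
  assumes der: "\<And>\<theta>. \<theta> \<in> ball c \<rho> \<Longrightarrow>
      (f has_derivative (\<lambda>h. grad \<theta> \<bullet> h)) (at \<theta>) \<and> (grad has_derivative (\<lambda>h. hess \<theta> *v h)) (at \<theta>)"
    and hess_le: "\<And>\<theta>. \<theta> \<in> ball c \<rho> \<Longrightarrow> (spec_norm A)\<^sup>2 * norm (hess \<theta>) \<le> k"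
    and radius: "spec_norm A * Mb < \<rho>"
    and uv: "norm u < Mb" "norm v < Mb" "u \<noteq> v"
    and g: "0 \<le> g" "g \<le> Y" and q: "0 < q" "q \<le> 1"
  shows "\<bar>f (c + A *v u) - f (c + A *v v)\<bar> / norm (u - v) powr q * g powr q
           \<le> (2 * Mb) powr (1 - q) * (spec_norm A * norm (grad c) + Mb * k) * Y powr q"
proof -
  define L where "L = spec_norm A * norm (grad c) + Mb * k"
  have "\<bar>f (c + A *v u) - f (c + A *v v)\<bar> \<le> L * norm (u - v)"
    unfolding L_def using rescaled_difference_le[OF der hess_le radius uv(1,2)] by (simp add: mult.commute)
  moreover have "0 \<le> L"
    using order_trans[OF abs_ge_zero calculation] uv(3) by (simp add: zero_le_mult_iff)
  moreover have "norm (u - v) \<le> 2 * Mb"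
    using norm_triangle_ineq4[of u v] uv by simp
  ultimately have "\<bar>f (c + A *v u) - f (c + A *v v)\<bar> / norm (u - v) powr q \<le> L * (2 * Mb) powr (1 - q)"
    using uv q by (intro divide_powr_le_if_le_mult) auto
  moreover have "g powr q \<le> Y powr q"
    using g q by (intro powr_mono2) auto
  ultimately have "\<bar>f (c + A *v u) - f (c + A *v v)\<bar> / norm (u - v) powr q * g powr q
      \<le> L * (2 * Mb) powr (1 - q) * Y powr q"
    using \<open>0 \<le> L\<close> by (intro mult_mono) auto
  then show ?thesis
    unfolding L_def by (simp only: mult_ac)
qed

lemma holder_quotient_SUP_le:
  fixes f :: "real^'n::finite \<Rightarrow> real" and grad :: "real^'n \<Rightarrow> real^'n"
    and hess :: "real^'n \<Rightarrow> real^'n^'n" and A :: "real^'n^'n"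
    and S :: "((real^'n) \<times> (real^'n)) set"
  assumes der: "\<And>\<theta>. \<theta> \<in> ball c \<rho> \<Longrightarrow>
      (f has_derivative (\<lambda>h. grad \<theta> \<bullet> h)) (at \<theta>) \<and> (grad has_derivative (\<lambda>h. hess \<theta> *v h)) (at \<theta>)"
    and ball: "ball c \<rho> \<subseteq> B"
    and radius: "spec_norm A * Mb < \<rho>" and "0 < Mb"
    and S: "S \<subseteq> {(u, v). norm u < Mb \<and> norm v < Mb \<and> u \<noteq> v}"
    and g: "0 \<le> g" "g \<le> Y" and q: "0 < q" "q \<le> 1"
  shows "(SUP (u, v)\<in>S. ereal (\<bar>f (c + A *v u) - f (c + A *v v)\<bar> / norm (u - v) powr q * g powr q))
    \<le> ereal ((2 * Mb) powr (1 - q))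
       * (ereal (norm (spec_norm A *\<^sub>R grad c))
          + ereal Mb * (ereal ((spec_norm A)\<^sup>2) * (SUP \<theta>\<in>B. ereal (norm (hess \<theta>)))))
       * ereal (Y powr q)"
    (is "?lhs \<le> ereal ?a * (ereal ?b + ereal Mb * ?K) * ereal ?y")
proof -
  have "c \<in> B"
    using ball radius \<open>0 < Mb\<close> spec_norm_nonneg[of A]
    by (metis centre_in_ball mult_nonneg_nonneg less_imp_le order.strict_trans1 subsetD)
  then have "ereal (norm (hess c)) \<le> (SUP \<theta>\<in>B. ereal (norm (hess \<theta>)))"
    by (rule SUP_upper)
  then have "0 \<le> ?K"
    by (auto simp: ereal_zero_le_0_iff intro: order_trans[rotated])
  txt \<open>The supremum of the Hessian norms may be infinite, and \<open>\<infinity> * 0 = 0\<close> in ereal,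
    so the case Y = 0 is treated separately.\<close>
  consider "Y = 0" | "0 < Y" "?K = \<infinity>" | k where "?K = ereal k"
  proof (cases "?K = \<infinity>")
    case True
    then show ?thesis
      using that(1,2) g by fastforce
  next
    case False
    then show ?thesis
      using that(3) \<open>0 \<le> ?K\<close> by (cases ?K) auto
  qed
  then show ?thesis
  proof cases
    case 1
    then have "?lhs \<le> 0"
      using g by (intro SUP_least) auto
    then show ?thesis
      using 1 q by (simp flip: zero_ereal_def)
  next
    case 2
    then show ?thesis
      using q \<open>0 < Mb\<close> by simp
  next
    case 3
    have hess_le: "(spec_norm A)\<^sup>2 * norm (hess \<theta>) \<le> k" if "\<theta> \<in> ball c \<rho>" for \<theta>
    proof -
      have "ereal ((spec_norm A)\<^sup>2 * norm (hess \<theta>)) \<le> ?K"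
        using ball that by (simp only: times_ereal.simps(1)[symmetric]) (intro ereal_mult_left_mono SUP_upper; auto)
      then show ?thesis
        using 3 by simp
    qed
    have "?lhs \<le> ereal (?a * (spec_norm A * norm (grad c) + Mb * k) * ?y)"
    proof (intro SUP_least, clarify)
      fix u v assume "(u, v) \<in> S"
      with S have "norm u < Mb" "norm v < Mb" "u \<noteq> v"
        by auto
      from holder_quotient_le[OF der hess_le radius this g q] show "ereal (\<bar>f (c + A *v u) - f (c + A *v v)\<bar> / norm (u - v) powr q * g powr q)
          \<le> ereal (?a * (spec_norm A * norm (grad c) + Mb * k) * ?y)"
        by simp
    qed
    then show ?thesis
      using 3 spec_norm_nonneg[of A] by simp
  qed
qed

section \<open>Convergence in outer probability\<close>

lemma outer_prob_nonneg: "A \<subseteq> space M \<Longrightarrow> 0 \<le> outer_prob M A"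
  unfolding outer_prob_def by (rule cInf_greatest) auto

lemma outer_prob_le_measure: "B \<in> sets M \<Longrightarrow> A \<subseteq> B \<Longrightarrow> outer_prob M A \<le> measure M B"
  unfolding outer_prob_def by (rule cInf_lower) (auto intro: bdd_belowI[of _ 0])

lemma outer_prob_mono: "A \<subseteq> B \<Longrightarrow> B \<subseteq> space M \<Longrightarrow> outer_prob M A \<le> outer_prob M B"
  unfolding outer_prob_def[of M B]
  by (rule cInf_greatest) (auto intro: outer_prob_le_measure)

lemma outer_prob_null: "N \<in> null_sets M \<Longrightarrow> A \<subseteq> N \<Longrightarrow> outer_prob M A = 0"
  using outer_prob_le_measure[of N M A] outer_prob_nonneg[of A M] sets.sets_into_space[of N M]
  by (auto simp: null_sets_def measure_def)

lemma outer_prob_Un_le: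
  assumes A: "A \<subseteq> space M" and B: "B \<subseteq> space M"
  shows "outer_prob M (A \<union> B) \<le> outer_prob M A + outer_prob M B"
proof -
  have "outer_prob M (A \<union> B) - measure M B' \<le> measure M A'"
    if "A' \<in> sets M" "A \<subseteq> A'" "B' \<in> sets M" "B \<subseteq> B'" for A' B'
  proof -
    have "outer_prob M (A \<union> B) \<le> measure M (A' \<union> B')"
      using that by (intro outer_prob_le_measure) auto
    also have "\<dots> \<le> measure M A' + measure M B'"
      using that by (intro measure_Un_le)
    finally show ?thesis by simp
  qed
  then have "outer_prob M (A \<union> B) - measure M B' \<le> outer_prob M A"
    if "B' \<in> sets M" "B \<subseteq> B'" for B'
    unfolding outer_prob_def[of M A] using A that by (intro cInf_greatest) auto
  then have "outer_prob M (A \<union> B) - outer_prob M A \<le> outer_prob M B"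
    unfolding outer_prob_def[of M B] using B by (intro cInf_greatest) force+
  then show ?thesis by simp
qed

lemma outer_prob_less_if_subset_Un:
  assumes "C \<subseteq> A \<union> B" "A \<subseteq> space M" "B \<subseteq> space M"
    and "outer_prob M A < a" "outer_prob M B < b"
  shows "outer_prob M C < a + b"
  using outer_prob_mono[of C "A \<union> B" M] outer_prob_Un_le[of A M B] assms by simp

lemma tendsto0_prob_iff:
  "tendsto0_prob M F X \<longleftrightarrow>
     (\<forall>\<epsilon>>0. \<forall>\<eta>>0. eventually (\<lambda>T. outer_prob M {\<omega> \<in> space M. ereal \<epsilon> < X T \<omega>} < \<eta>) F)"
  unfolding tendsto0_prob_def tendsto_iff dist_real_def
  by (simp add: outer_prob_nonneg)

lemma tendsto0_probD:
  "tendsto0_prob M F X \<Longrightarrow> 0 < \<epsilon> \<Longrightarrow> 0 < \<eta> \<Longrightarrow>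
     eventually (\<lambda>T. outer_prob M {\<omega> \<in> space M. ereal \<epsilon> < X T \<omega>} < \<eta>) F"
  unfolding tendsto0_prob_iff by blast

lemma tendsto0_prob_AE_mono:
  assumes le: "eventually (\<lambda>T. AE \<omega> in M. X T \<omega> \<le> Y T \<omega>) F" and Y: "tendsto0_prob M F Y"
  shows "tendsto0_prob M F X"
  unfolding tendsto0_prob_iff
proof (intro allI impI)
  fix \<epsilon> \<eta> :: real assume "\<epsilon> > 0" "\<eta> > 0"
  with Y have "eventually (\<lambda>T. outer_prob M {\<omega> \<in> space M. ereal \<epsilon> < Y T \<omega>} < \<eta>) F"
    by (rule tendsto0_probD)
  with le show "eventually (\<lambda>T. outer_prob M {\<omega> \<in> space M. ereal \<epsilon> < X T \<omega>} < \<eta>) F"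
  proof eventually_elim
    case (elim T)
    then obtain N where N: "N \<in> null_sets M" "{\<omega> \<in> space M. \<not> X T \<omega> \<le> Y T \<omega>} \<subseteq> N"
      by (auto elim!: AE_E3)
    then have N_space: "N \<subseteq> space M"
      by (auto dest: sets.sets_into_space)
    have "{\<omega> \<in> space M. ereal \<epsilon> < X T \<omega>} \<subseteq> {\<omega> \<in> space M. ereal \<epsilon> < Y T \<omega>} \<union> N"
      using N(2) by (auto intro: order_less_le_trans)
    then have "outer_prob M {\<omega> \<in> space M. ereal \<epsilon> < X T \<omega>} \<le> outer_prob M ({\<omega> \<in> space M. ereal \<epsilon> < Y T \<omega>} \<union> N)"
      using N_space by (intro outer_prob_mono) auto
    also have "\<dots> \<le> outer_prob M {\<omega> \<in> space M. ereal \<epsilon> < Y T \<omega>}"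
      using outer_prob_Un_le[of _ M N] outer_prob_null[OF N(1)] N_space by force
    finally show ?case using elim by simp
  qed
qed

lemma tendsto0_prob_add:
  assumes X: "tendsto0_prob M F (\<lambda>T \<omega>. ereal (X T \<omega>))"
    and Y: "tendsto0_prob M F (\<lambda>T \<omega>. ereal (Y T \<omega>))"
  shows "tendsto0_prob M F (\<lambda>T \<omega>. ereal (X T \<omega> + Y T \<omega>))"
  unfolding tendsto0_prob_iff
proof (intro allI impI)
  fix \<epsilon> \<eta> :: real assume "\<epsilon> > 0" "\<eta> > 0"
  then have "eventually (\<lambda>T. outer_prob M {\<omega> \<in> space M. ereal (\<epsilon> / 2) < X T \<omega>} < \<eta> / 2) F"
    "eventually (\<lambda>T. outer_prob M {\<omega> \<in> space M. ereal (\<epsilon> / 2) < Y T \<omega>} < \<eta> / 2) F"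
    by (intro tendsto0_probD[OF X] tendsto0_probD[OF Y]; simp)+
  then show "eventually (\<lambda>T. outer_prob M {\<omega> \<in> space M. ereal \<epsilon> < ereal (X T \<omega> + Y T \<omega>)} < \<eta>) F"
  proof eventually_elim
    case (elim T)
    have "{\<omega> \<in> space M. ereal \<epsilon> < ereal (X T \<omega> + Y T \<omega>)}
            \<subseteq> {\<omega> \<in> space M. ereal (\<epsilon> / 2) < ereal (X T \<omega>)}
              \<union> {\<omega> \<in> space M. ereal (\<epsilon> / 2) < ereal (Y T \<omega>)}"
      by auto
    from outer_prob_less_if_subset_Un[OF this _ _ elim] show ?case by simp
  qed
qed

lemma tendsto0_prob_sum:
  assumes "finite J" "\<And>j. j \<in> J \<Longrightarrow> tendsto0_prob M F (\<lambda>T \<omega>. ereal (Y j T \<omega>))"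
  shows "tendsto0_prob M F (\<lambda>T \<omega>. ereal (\<Sum>j\<in>J. Y j T \<omega>))"
  using assms
proof (induction J rule: finite_induct)
  case empty
  then show ?case by (simp add: tendsto0_prob_def outer_prob_null[of "{}"])
next
  case (insert j J)
  then show ?case by (simp add: tendsto0_prob_add)
qed

lemma tendsto0_prob_powr:
  assumes Y: "tendsto0_prob M F (\<lambda>T \<omega>. ereal (Y T \<omega>))"
    and nonneg: "\<And>T \<omega>. 0 \<le> Y T \<omega>" and "0 < q"
  shows "tendsto0_prob M F (\<lambda>T \<omega>. ereal (Y T \<omega> powr q))"
  unfolding tendsto0_prob_iff
proof (intro allI impI)
  fix \<epsilon> \<eta> :: real assume "\<epsilon> > 0" "\<eta> > 0"
  then have "eventually (\<lambda>T. outer_prob M {\<omega> \<in> space M. ereal (\<epsilon> powr (1 / q)) < Y T \<omega>} < \<eta>) F"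
    by (intro tendsto0_probD[OF Y]) simp_all
  moreover have "{\<omega> \<in> space M. ereal \<epsilon> < ereal (Y T \<omega> powr q)}
      \<subseteq> {\<omega> \<in> space M. ereal (\<epsilon> powr (1 / q)) < ereal (Y T \<omega>)}" for T
  proof (intro subsetI, clarsimp)
    fix \<omega> assume "\<epsilon> < Y T \<omega> powr q"
    then have "\<epsilon> powr (1 / q) < (Y T \<omega> powr q) powr (1 / q)"
      using \<open>\<epsilon> > 0\<close> \<open>q > 0\<close> by (intro powr_less_mono2) auto
    also have "\<dots> = Y T \<omega>"
      using nonneg \<open>q > 0\<close> by (simp add: powr_powr)
    finally show "\<epsilon> powr (1 / q) < Y T \<omega>" .
  qed
  ultimately show "eventually (\<lambda>T. outer_prob M {\<omega> \<in> space M. ereal \<epsilon> < ereal (Y T \<omega> powr q)} < \<eta>) F"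
    by (elim eventually_mono) (rule order_le_less_trans[OF outer_prob_mono]; auto)
qed

lemma bounded_probD:
  "bounded_prob M F X \<Longrightarrow> 0 < \<eta> \<Longrightarrow>
     \<exists>C. eventually (\<lambda>T. outer_prob M {\<omega> \<in> space M. ereal C < X T \<omega>} < \<eta>) F"
  unfolding bounded_prob_def by blast

lemma bounded_prob_add:
  assumes X: "bounded_prob M F X" and Y: "bounded_prob M F Y"
  shows "bounded_prob M F (\<lambda>T \<omega>. X T \<omega> + Y T \<omega>)"
  unfolding bounded_prob_def
proof (intro allI impI)
  fix \<eta> :: real assume "\<eta> > 0"
  then obtain C D where
    "eventually (\<lambda>T. outer_prob M {\<omega> \<in> space M. ereal C < X T \<omega>} < \<eta> / 2) F"
    "eventually (\<lambda>T. outer_prob M {\<omega> \<in> space M. ereal D < Y T \<omega>} < \<eta> / 2) F"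
    using bounded_probD[OF X] bounded_probD[OF Y] by (meson half_gt_zero)
  then have "eventually (\<lambda>T. outer_prob M {\<omega> \<in> space M. ereal (C + D) < X T \<omega> + Y T \<omega>} < \<eta>) F"
  proof eventually_elim
    case (elim T)
    have "X T \<omega> + Y T \<omega> \<le> ereal (C + D)" if "X T \<omega> \<le> ereal C" "Y T \<omega> \<le> ereal D" for \<omega>
      using add_mono[OF that] by simp
    then have "{\<omega> \<in> space M. ereal (C + D) < X T \<omega> + Y T \<omega>}
            \<subseteq> {\<omega> \<in> space M. ereal C < X T \<omega>} \<union> {\<omega> \<in> space M. ereal D < Y T \<omega>}"
      by (auto simp: not_less[symmetric])
    from outer_prob_less_if_subset_Un[OF this _ _ elim] show ?case by simp
  qed
  then show "\<exists>C. eventually (\<lambda>T. outer_prob M {\<omega> \<in> space M. ereal C < X T \<omega> + Y T \<omega>} < \<eta>) F" ..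
qed

lemma bounded_prob_cmult:
  assumes X: "bounded_prob M F X" and "0 \<le> c"
  shows "bounded_prob M F (\<lambda>T \<omega>. ereal c * X T \<omega>)"
  unfolding bounded_prob_def
proof (intro allI impI)
  fix \<eta> :: real assume "\<eta> > 0"
  then obtain C where "eventually (\<lambda>T. outer_prob M {\<omega> \<in> space M. ereal C < X T \<omega>} < \<eta>) F"
    using bounded_probD[OF X] by blast
  moreover have "{\<omega> \<in> space M. ereal (c * C) < ereal c * X T \<omega>} \<subseteq> {\<omega> \<in> space M. ereal C < X T \<omega>}" for T
  proof (intro subsetI, clarsimp)
    fix \<omega> assume "ereal (c * C) < ereal c * X T \<omega>"
    moreover have "ereal c * X T \<omega> \<le> ereal (c * C)" if "X T \<omega> \<le> ereal C"
      using ereal_mult_left_mono[OF that, of "ereal c"] \<open>0 \<le> c\<close> by simp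
    ultimately show "ereal C < X T \<omega>"
      by (meson not_le)
  qed
  ultimately have "eventually (\<lambda>T. outer_prob M {\<omega> \<in> space M. ereal (c * C) < ereal c * X T \<omega>} < \<eta>) F"
    by (elim eventually_mono) (rule order_le_less_trans[OF outer_prob_mono]; auto)
  then show "\<exists>C. eventually (\<lambda>T. outer_prob M {\<omega> \<in> space M. ereal C < ereal c * X T \<omega>} < \<eta>) F" ..
qed

lemma tendsto0_prob_mult_bounded:
  assumes K: "bounded_prob M F K" and Y: "tendsto0_prob M F Y"
    and Y_nonneg: "\<And>T \<omega>. 0 \<le> Y T \<omega>"
  shows "tendsto0_prob M F (\<lambda>T \<omega>. K T \<omega> * Y T \<omega>)"
  unfolding tendsto0_prob_iff
proof (intro allI impI)
  fix \<epsilon> \<eta> :: real assume "\<epsilon> > 0" "\<eta> > 0"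
  then obtain C where C: "eventually (\<lambda>T. outer_prob M {\<omega> \<in> space M. ereal C < K T \<omega>} < \<eta> / 2) F"
    using bounded_probD[OF K] by (meson half_gt_zero)
  define C' where "C' = max C 1"
  have C': "0 < C'" "ereal C \<le> ereal C'"
    by (simp_all add: C'_def)
  have "eventually (\<lambda>T. outer_prob M {\<omega> \<in> space M. ereal (\<epsilon> / C') < Y T \<omega>} < \<eta> / 2) F"
    using \<open>\<epsilon> > 0\<close> \<open>\<eta> > 0\<close> by (intro tendsto0_probD[OF Y]) (simp_all add: C')
  with C show "eventually (\<lambda>T. outer_prob M {\<omega> \<in> space M. ereal \<epsilon> < K T \<omega> * Y T \<omega>} < \<eta>) F"
  proof eventually_elim
    case (elim T)
    have "K T \<omega> * Y T \<omega> \<le> ereal \<epsilon>" if "K T \<omega> \<le> ereal C" "Y T \<omega> \<le> ereal (\<epsilon> / C')" for \<omega>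
    proof -
      have "K T \<omega> * Y T \<omega> \<le> ereal C' * ereal (\<epsilon> / C')"
        using that Y_nonneg C' by (intro ereal_mult_mono) (auto intro: order_trans)
      also have "\<dots> = ereal \<epsilon>"
        using C' by simp
      finally show ?thesis .
    qed
    then have "{\<omega> \<in> space M. ereal \<epsilon> < K T \<omega> * Y T \<omega>}
                 \<subseteq> {\<omega> \<in> space M. ereal C < K T \<omega>} \<union> {\<omega> \<in> space M. ereal (\<epsilon> / C') < Y T \<omega>}"
      by (auto simp: not_less[symmetric])
    from outer_prob_less_if_subset_Un[OF this _ _ elim] show ?case by simp
  qed
qed


theorem proposition2:
  fixes \<Theta> :: "(real^'n::finite) set" and \<theta>s :: "real^'n"
    and M :: "'a measure" and TT :: "real set"
    and H :: "real \<Rightarrow> 'a \<Rightarrow> real^'n \<Rightarrow> real"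
    and \<xi> :: "real \<Rightarrow> 'a \<Rightarrow> 'n \<Rightarrow> real"
    and \<alpha> :: "real \<Rightarrow> 'n \<Rightarrow> real"
    and q R :: real
    and D1 :: "real \<Rightarrow> 'a \<Rightarrow> real^'n \<Rightarrow> real^'n"
    and D2 :: "real \<Rightarrow> 'a \<Rightarrow> real^'n \<Rightarrow> real^'n^'n"
    and D3 :: "real \<Rightarrow> 'a \<Rightarrow> real^'n \<Rightarrow> real^'n^'n^'n"
  assumes \<Theta>: "bounded \<Theta>" "open \<Theta>" "\<theta>s \<in> \<Theta>"
    and P: "prob_space M"
    and TT: "TT \<subseteq> {0..}" "\<forall>x. \<exists>t\<in>TT. x < t"
    and H_meas: "\<forall>T\<in>TT. \<forall>\<theta>\<in>closure \<Theta>. (\<lambda>\<omega>. H T \<omega> \<theta>) \<in> borel_measurable M"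
    and H_cont: "\<forall>T\<in>TT. \<forall>\<omega>\<in>space M. continuous_on (closure \<Theta>) (H T \<omega>)"
    and \<xi>_meas: "\<forall>T\<in>TT. \<forall>j. (\<lambda>\<omega>. \<xi> T \<omega> j) \<in> borel_measurable M"
    and \<xi>_pos: "\<forall>T\<in>TT. \<forall>\<omega>\<in>space M. \<forall>j. \<xi> T \<omega> j > 0"
    and \<alpha>_nz: "\<forall>T\<in>TT. \<forall>j. \<alpha> T j \<noteq> 0"
    and a_lim: "((\<lambda>T. spec_norm (diag_mat (\<alpha> T))) \<longlongrightarrow> 0) (along TT)"
    and q: "0 < q" "q \<le> 1"
    and A6: "\<forall>j\<in>J0 \<theta>s. tendsto0_prob M (along TT)
               (\<lambda>T \<omega>. ereal (\<xi> T \<omega> j powr (-1/q) / \<bar>\<alpha> T j\<bar>))"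
    and R: "R > 0"
    and A7'_i: "\<forall>T\<in>TT. AE \<omega> in M. \<forall>\<theta>\<in>{\<theta>\<in>\<Theta>. norm (\<theta> - \<theta>s) < R}.
               (H T \<omega> has_derivative (\<lambda>h. D1 T \<omega> \<theta> \<bullet> h)) (at \<theta>) \<and>
               (D1 T \<omega> has_derivative (\<lambda>h. D2 T \<omega> \<theta> *v h)) (at \<theta>) \<and>
               (D2 T \<omega> has_derivative (\<lambda>h. tensor3_app (D3 T \<omega> \<theta>) h)) (at \<theta>)"
    and A7'_ii: "bounded_prob M (along TT)
               (\<lambda>T \<omega>. ereal (norm (spec_norm (diag_mat (\<alpha> T)) *\<^sub>R D1 T \<omega> \<theta>s)))"
    and A7'_iii: "bounded_prob M (along TT)
               (\<lambda>T \<omega>. ereal ((spec_norm (diag_mat (\<alpha> T)))\<^sup>2) *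
                  (SUP \<theta>\<in>{\<theta>\<in>\<Theta>. norm (\<theta> - \<theta>s) < R}. ereal (norm (D2 T \<omega> \<theta>))))"
    and A7'_iv: "bounded_prob M (along TT)
               (\<lambda>T \<omega>. ereal ((spec_norm (diag_mat (\<alpha> T)))\<^sup>2) *
                  (SUP \<theta>\<in>{\<theta>\<in>\<Theta>. norm (\<theta> - \<theta>s) < R}. ereal (norm (D3 T \<omega> \<theta>))))"
  shows "\<forall>Mb>0. tendsto0_prob M (along TT)
           (\<lambda>T \<omega>. SUP (u, v) \<in> {(u, v). \<theta>s + diag_mat (\<alpha> T) *v u \<in> closure \<Theta>
                                    \<and> \<theta>s + diag_mat (\<alpha> T) *v v \<in> closure \<Theta>
                                    \<and> norm u < Mb \<and> norm v < Mb \<and> u \<noteq> v}.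
              ereal (\<bar>H T \<omega> (\<theta>s + diag_mat (\<alpha> T) *v u) - H T \<omega> (\<theta>s + diag_mat (\<alpha> T) *v v)\<bar>
                     / norm (u - v) powr q
                     * spec_norm (sub00 (J0 \<theta>s) (Gmat q \<theta>s (\<alpha> T) (\<xi> T \<omega>))) powr q))"
proof (intro allI impI)
  \<comment> \<open>Only the bounds on the first two derivatives enter.\<close>
  fix Mb :: real assume "0 < Mb"
  define B where "B = {\<theta>\<in>\<Theta>. norm (\<theta> - \<theta>s) < R}"
  obtain \<rho> where "0 < \<rho>" "ball \<theta>s \<rho> \<subseteq> B"
  proof -
    obtain r where "0 < r" "ball \<theta>s r \<subseteq> \<Theta>"
      using \<Theta> openE by blast
    moreover have "ball \<theta>s (min r R) \<subseteq> B"
      using \<open>ball \<theta>s r \<subseteq> \<Theta>\<close> by (auto simp: B_def dist_norm norm_minus_commute)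
    ultimately show ?thesis
      using that[of "min r R"] R by simp
  qed
  define Y where "Y T \<omega> = (\<Sum>j\<in>J0 \<theta>s. \<xi> T \<omega> j powr (-1/q) / \<bar>\<alpha> T j\<bar>)" for T \<omega>
  define K where "K T \<omega> = ereal ((2 * Mb) powr (1 - q))
      * (ereal (norm (spec_norm (diag_mat (\<alpha> T)) *\<^sub>R D1 T \<omega> \<theta>s))
         + ereal Mb * (ereal ((spec_norm (diag_mat (\<alpha> T)))\<^sup>2) * (SUP \<theta>\<in>B. ereal (norm (D2 T \<omega> \<theta>)))))"
    for T \<omega>
  have "\<forall>\<^sub>F T in along TT. T \<in> TT \<and> spec_norm (diag_mat (\<alpha> T)) * Mb < \<rho>"
    using order_tendstoD(2)[OF a_lim, of "\<rho> / Mb"] \<open>0 < \<rho>\<close> \<open>0 < Mb\<close>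
    by (auto simp: along_def eventually_inf_principal pos_less_divide_eq elim: eventually_mono)
  then have "\<forall>\<^sub>F T in along TT. AE \<omega> in M.
      (SUP (u, v) \<in> {(u, v). \<theta>s + diag_mat (\<alpha> T) *v u \<in> closure \<Theta>
                                    \<and> \<theta>s + diag_mat (\<alpha> T) *v v \<in> closure \<Theta>
                                    \<and> norm u < Mb \<and> norm v < Mb \<and> u \<noteq> v}.
              ereal (\<bar>H T \<omega> (\<theta>s + diag_mat (\<alpha> T) *v u) - H T \<omega> (\<theta>s + diag_mat (\<alpha> T) *v v)\<bar>
                     / norm (u - v) powr q
                     * spec_norm (sub00 (J0 \<theta>s) (Gmat q \<theta>s (\<alpha> T) (\<xi> T \<omega>))) powr q))
      \<le> K T \<omega> * ereal (Y T \<omega> powr q)"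
    (is "\<forall>\<^sub>F T in _. AE \<omega> in M. ?X T \<omega> \<le> _")
  proof (rule eventually_mono)
    fix T assume T: "T \<in> TT \<and> spec_norm (diag_mat (\<alpha> T)) * Mb < \<rho>"
    show "AE \<omega> in M. ?X T \<omega> \<le> K T \<omega> * ereal (Y T \<omega> powr q)"
      using A7'_i T \<open>ball \<theta>s \<rho> \<subseteq> B\<close> \<open>0 < Mb\<close> q \<alpha>_nz unfolding K_def Y_def B_def
      by (elim ballE AE_mp; intro AE_I2 impI holder_quotient_SUP_le spec_norm_sub00_Gmat_le)
        (auto simp: spec_norm_nonneg)
  qed
  moreover have "tendsto0_prob M (along TT) (\<lambda>T \<omega>. K T \<omega> * ereal (Y T \<omega> powr q))"
  proof (rule tendsto0_prob_mult_bounded)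
    show "bounded_prob M (along TT) K"
      unfolding K_def B_def using A7'_ii A7'_iii \<open>0 < Mb\<close>
      by (intro bounded_prob_cmult bounded_prob_add) auto
    show "tendsto0_prob M (along TT) (\<lambda>T \<omega>. ereal (Y T \<omega> powr q))"
      unfolding Y_def using A6 q by (intro tendsto0_prob_powr tendsto0_prob_sum sum_nonneg) auto
  qed simp
  ultimately show "tendsto0_prob M (along TT) ?X"
    by (rule tendsto0_prob_AE_mono)
qed

end
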